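(* Let $N\ge 2$, $\mathcal N=\{1,\dots,N\}$, $\mathcal F=\{(i,j): i<j,\ i,j\in\mathcal N\}$, $B\in\mathbb Z_{\ge0}$, $S_1,\dots,S_N\in\mathbb Z_{\ge 0}$, and let $\mathcal X\subset\mathbb Z_{\ge0}^{\mathcal F}$ be the set of integer vectors $x$ with $\sum_{(i,j)\in\mathcal F}x_{ij}\le B$ and $\sum_{j<i}x_{ji}+\sum_{j>i}x_{ij}\le S_i$ for all $i$. Let $p_{\mathrm{e2e}}\in[0,1]$ and $\Delta t>0$, and define the throughput region $$\Lambda_{\mathrm{EGS}}=\frac{p_{\mathrm{e2e}}}{\Delta t}\,\mathrm{co}(\mathcal X)=\Big\{\tfrac{p_{\mathrm{e2e}}}{\Delta t}\textstyle\sum_{x\in\mathcal X}\delta_x x:\ \sum_{x\in\mathcal X}\delta_x=1,\ \delta_x\ge 0\Big\}.$$ Then $$R^{\mathrm{sec}}_{\mathrm{EGS}}\triangleq\max_{\lambda\in\Lambda_{\mathrm{EGS}}}\sum_{(i,j)\in\mathcal F}\lambda_{ij}=\frac{p_{\mathrm{e2e}}}{\Delta t}\,\min\Big\{B,\ \Big\lfloor\tfrac12\sum_i S_i\Big\rfloor,\ \sum_i S_i-S_{\max}\Big\},$$ where $S_{\max}=\max_i S_i$.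
   Context: This models an all-photonic entanglement generation switch with $N$ clients, $B$ Bell-state analyzers, per-client multiplexing degrees $S_i$, per-slot end-to-end success probability $p_{\mathrm{e2e}}$ of a BSA assigned to a pair, and slot duration $\Delta t$; $\mathrm{co}(\cdot)$ denotes convex hull. *)

theory Defs
  imports "HOL-Analysis.Analysis"
begin

definition pairs :: "nat \<Rightarrow> (nat \<times> nat) set" where
  "pairs N = {(i,j). 1 \<le> i \<and> i < j \<and> j \<le> N}"

definition feasible :: "nat \<Rightarrow> nat \<Rightarrow> (nat \<Rightarrow> nat) \<Rightarrow> ((nat \<times> nat) \<Rightarrow> nat) set" where
  "feasible N B S = {x. (\<forall>p. p \<notin> pairs N \<longrightarrow> x p = 0)
      \<and> (\<Sum>p\<in>pairs N. x p) \<le> B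
      \<and> (\<forall>i\<in>{1..N}. (\<Sum>j\<in>{j\<in>{1..N}. j < i}. x (j,i)) + (\<Sum>j\<in>{j\<in>{1..N}. i < j}. x (i,j)) \<le> S i)}"

definition throughput_region ::
  "nat \<Rightarrow> nat \<Rightarrow> (nat \<Rightarrow> nat) \<Rightarrow> real \<Rightarrow> real \<Rightarrow> ((nat \<times> nat) \<Rightarrow> real) set" where
  "throughput_region N B S pe2e dt =
    {lam. \<exists>\<delta> :: ((nat \<times> nat) \<Rightarrow> nat) \<Rightarrow> real.
        (\<forall>x\<in>feasible N B S. 0 \<le> \<delta> x) \<and> (\<Sum>x\<in>feasible N B S. \<delta> x) = 1
      \<and> lam = (\<lambda>p. pe2e / dt * (\<Sum>x\<in>feasible N B S. \<delta> x * real (x p)))}"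

end

theory Submission imports Defs begin

text \<open>The throughput is linear in \<open>\<lambda>\<close>, so its maximum over the convex hull is attained at
  an integer allocation and it suffices to maximise the total \<open>\<Sum>x\<^sub>i\<^sub>j\<close> over feasible \<open>x\<close>.
  Counting every pair at both of its clients gives \<open>2 \<Sum>x\<^sub>i\<^sub>j \<le> \<Sum>S\<^sub>i\<close>; since moreover the
  load of a client \<open>m\<close> is at most the total, \<open>2 \<Sum>x\<^sub>i\<^sub>j \<le> \<Sum>x\<^sub>i\<^sub>j + \<Sum>\<^sub>i\<^sub>\<noteq>\<^sub>m S\<^sub>i\<close>.
  Conversely, every \<open>K\<close> with \<open>2K \<le> \<Sum>S\<^sub>i\<close> and \<open>K + S\<^sub>u \<le> \<Sum>S\<^sub>i\<close> for all \<open>u\<close> is attained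
  greedily: serve one pair formed by the two clients of largest capacity and decrease both
  capacities; the two conditions then hold for \<open>K - 1\<close>.\<close>

definition client_load :: "nat \<Rightarrow> ((nat \<times> nat) \<Rightarrow> nat) \<Rightarrow> nat \<Rightarrow> nat" where
  "client_load N x i = (\<Sum>p\<in>pairs N. if fst p = i \<or> snd p = i then x p else 0)"

lemma finite_pairs: "finite (pairs N)"
proof (rule finite_subset)
  show "pairs N \<subseteq> {1..N} \<times> {1..N}" by (auto simp: pairs_def)
qed simp

lemma client_load_eq:
  assumes "i \<in> {1..N}"
  shows "client_load N x i
    = (\<Sum>j\<in>{j\<in>{1..N}. j < i}. x (j,i)) + (\<Sum>j\<in>{j\<in>{1..N}. i < j}. x (i,j))"
proof -
  have "client_load N x i = (\<Sum>p\<in>{p\<in>pairs N. snd p = i} \<union> {p\<in>pairs N. fst p = i}. x p)"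
    unfolding client_load_def
    by (rule sum.mono_neutral_cong_right) (use finite_pairs in auto)
  also have "\<dots> = (\<Sum>p\<in>{p\<in>pairs N. snd p = i}. x p) + (\<Sum>p\<in>{p\<in>pairs N. fst p = i}. x p)"
    by (rule sum.union_disjoint) (use finite_pairs in \<open>auto simp: pairs_def\<close>)
  also have "{p\<in>pairs N. snd p = i} = (\<lambda>j. (j,i)) ` {j\<in>{1..N}. j < i}"
    using assms by (auto simp: pairs_def)
  also have "{p\<in>pairs N. fst p = i} = (\<lambda>j. (i,j)) ` {j\<in>{1..N}. i < j}"
    using assms by (auto simp: pairs_def)
  finally show ?thesis
    by (simp add: sum.reindex inj_on_def)
qed

lemma feasible_iff_client_load:
  "x \<in> feasible N B S \<longleftrightarrow> (\<forall>p. p \<notin> pairs N \<longrightarrow> x p = 0) \<and> (\<Sum>p\<in>pairs N. x p) \<le> B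
      \<and> (\<forall>i\<in>{1..N}. client_load N x i \<le> S i)"
  unfolding feasible_def by (simp add: client_load_eq)

lemma sum_client_load: "(\<Sum>i=1..N. client_load N x i) = 2 * (\<Sum>p\<in>pairs N. x p)"
proof -
  have "(\<Sum>i=1..N. client_load N x i)
      = (\<Sum>p\<in>pairs N. \<Sum>i=1..N. if fst p = i \<or> snd p = i then x p else 0)"
    unfolding client_load_def by (rule sum.swap)
  also have "\<dots> = (\<Sum>p\<in>pairs N. 2 * x p)"
  proof (rule sum.cong)
    fix p assume "p \<in> pairs N"
    then obtain a b where ab: "p = (a,b)" "1 \<le> a" "a < b" "b \<le> N" by (auto simp: pairs_def)
    have "(\<Sum>i=1..N. if fst p = i \<or> snd p = i then x p else 0)
        = (\<Sum>i=1..N. (if i = a then x p else 0) + (if i = b then x p else 0))"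
      by (rule sum.cong) (use ab in auto)
    also have "\<dots> = 2 * x p" using ab by (simp add: sum.distrib)
    finally show "(\<Sum>i=1..N. if fst p = i \<or> snd p = i then x p else 0) = 2 * x p" .
  qed simp
  finally show ?thesis by (simp add: sum_distrib_left)
qed

lemma client_load_le_total: "client_load N x i \<le> (\<Sum>p\<in>pairs N. x p)"
  unfolding client_load_def by (rule sum_mono) auto

lemma client_load_add:
  "client_load N (\<lambda>p. x p + y p) i = client_load N x i + client_load N y i"
  unfolding client_load_def sum.distrib[symmetric] by (rule sum.cong) auto

lemma client_load_unit:
  assumes "(a, b) \<in> pairs N"
  shows "client_load N (\<lambda>p. if p = (a, b) then 1 else 0) i = (if i = a \<or> i = b then 1 else 0)"
proof -
  have "client_load N (\<lambda>p. if p = (a, b) then 1 else 0) i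
      = (\<Sum>p\<in>pairs N. if p = (a, b) then (if i = a \<or> i = b then 1 else 0) else 0)"
    unfolding client_load_def by (rule sum.cong) auto
  also have "\<dots> = (if i = a \<or> i = b then 1 else 0)"
    using assms finite_pairs by simp
  finally show ?thesis .
qed

lemma feasible_double_total_le:
  assumes "x \<in> feasible N B S"
  shows "2 * (\<Sum>p\<in>pairs N. x p) \<le> (\<Sum>i=1..N. S i)"
  unfolding sum_client_load[symmetric]
  by (rule sum_mono) (use assms in \<open>auto simp: feasible_iff_client_load\<close>)

lemma feasible_total_add_le:
  assumes "x \<in> feasible N B S" and m: "m \<in> {1..N}"
  shows "(\<Sum>p\<in>pairs N. x p) + S m \<le> (\<Sum>i=1..N. S i)"
proof -
  have load: "\<forall>i\<in>{1..N}. client_load N x i \<le> S i"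
    using assms(1) by (simp add: feasible_iff_client_load)
  have "2 * (\<Sum>p\<in>pairs N. x p) = client_load N x m + (\<Sum>i\<in>{1..N}-{m}. client_load N x i)"
    using m by (simp add: sum_client_load[symmetric] sum.remove)
  also have "\<dots> \<le> (\<Sum>p\<in>pairs N. x p) + (\<Sum>i\<in>{1..N}-{m}. S i)"
    using load by (intro add_mono client_load_le_total sum_mono) auto
  moreover have "S m + (\<Sum>i\<in>{1..N}-{m}. S i) = (\<Sum>i=1..N. S i)"
    using m by (simp add: sum.remove)
  ultimately show ?thesis by linarith
qed

definition max_total :: "nat \<Rightarrow> nat \<Rightarrow> (nat \<Rightarrow> nat) \<Rightarrow> nat" where
  "max_total N B S = min B (min ((\<Sum>i=1..N. S i) div 2) ((\<Sum>i=1..N. S i) - Max (S ` {1..N})))"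

lemma feasible_total_le_max_total:
  assumes "x \<in> feasible N B S" and "N \<ge> 1"
  shows "(\<Sum>p\<in>pairs N. x p) \<le> max_total N B S"
proof -
  have "Max (S ` {1..N}) \<in> S ` {1..N}" by (rule Max_in) (use assms(2) in auto)
  then obtain m where "m \<in> {1..N}" "Max (S ` {1..N}) = S m" by auto
  then show ?thesis
    using assms(1) feasible_total_add_le[OF assms(1)] feasible_double_total_le[OF assms(1)]
    by (fastforce simp: max_total_def feasible_iff_client_load)
qed

lemma finite_ex_max_value:
  fixes f :: "'a \<Rightarrow> 'b::linorder"
  assumes "finite A" "A \<noteq> {}"
  obtains a where "a \<in> A" "\<And>u. u \<in> A \<Longrightarrow> f u \<le> f a"
  using Max_in[of "f ` A"] Max_ge[of "f ` A"] assms by fastforce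

lemma capacity_conditions_decrement_top_two:
  fixes S :: "'a \<Rightarrow> nat"
  assumes "finite A" and mm': "m \<in> A" "m' \<in> A" "m \<noteq> m'"
    and top: "\<And>u. u \<in> A \<Longrightarrow> S u \<le> S m" "\<And>u. u \<in> A - {m} \<Longrightarrow> S u \<le> S m'"
    and half: "2 * Suc K \<le> sum S A" and cap: "\<And>u. u \<in> A \<Longrightarrow> Suc K + S u \<le> sum S A"
  obtains S' where "\<And>u. S u = S' u + (if u = m then 1 else 0) + (if u = m' then 1 else 0)"
    "2 * K \<le> sum S' A" "\<And>u. u \<in> A \<Longrightarrow> K + S' u \<le> sum S' A"
proof -
  have "0 < sum S (A - {m})"
    using cap[OF mm'(1)] assms(1) mm'(1) by (simp add: sum_diff1_nat member_le_sum)
  moreover have "sum S (A - {m}) \<le> card (A - {m}) * S m'"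
    using sum_bounded_above[of "A - {m}" S "S m'"] top(2) by simp
  ultimately have pos': "0 < S m'" by (cases "S m' = 0") auto
  then have pos: "0 < S m" using top(1)[OF mm'(2)] by simp
  define S' where "S' = S(m := S m - 1, m' := S m' - 1)"
  have S: "S u = S' u + (if u = m then 1 else 0) + (if u = m' then 1 else 0)" for u
    using pos pos' mm'(3) by (simp add: S'_def)
  have "sum S A = (\<Sum>u\<in>A. S' u + (if u = m then 1 else 0) + (if u = m' then 1 else 0))"
    by (intro sum.cong refl S)
  also have "\<dots> = sum S' A + 2"
    using assms(1) mm' by (simp add: sum.distrib)
  finally have sum_S': "sum S A = sum S' A + 2" .
  have "K + S' u \<le> sum S' A" if u: "u \<in> A" for u
  proof (cases "u = m \<or> u = m'")
    case True
    then show ?thesis using cap[OF u] sum_S' S[of u] mm'(3) by auto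
  next
    case False
    have "S m + S m' + S u = sum S {m, m', u}" using False mm'(3) by (auto simp: add.assoc)
    also have "\<dots> \<le> sum S A" by (rule sum_mono2) (use assms(1) mm' u in auto)
    finally have three: "S m + S m' + S u \<le> sum S A" .
    txt \<open>Equality in \<open>cap\<close> would force \<open>Suc K \<le> S u\<close> by \<open>half\<close>, and then
      \<open>S m + S m' \<ge> 2 * S u > sum S A - S u\<close>.\<close>
    have "Suc K + S u < sum S A"
      using three top(1)[OF u] top(2)[of u] u False cap[OF u] half by simp
    then show ?thesis using False sum_S' S[of u] by simp
  qed
  with S sum_S' half show ?thesis using that by simp
qed

lemma ex_allocation:
  assumes "N \<ge> 2" and "2 * K \<le> (\<Sum>i=1..N. S i)"
    and "\<And>u. u \<in> {1..N} \<Longrightarrow> K + S u \<le> (\<Sum>i=1..N. S i)"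
  shows "\<exists>x. (\<forall>p. p \<notin> pairs N \<longrightarrow> x p = 0) \<and> (\<Sum>p\<in>pairs N. x p) = K
      \<and> (\<forall>i\<in>{1..N}. client_load N x i \<le> S i)"
  using assms(2,3)
proof (induction K arbitrary: S)
  case 0
  show ?case by (rule exI[of _ "\<lambda>_. 0"]) (simp add: client_load_def)
next
  case (Suc K S)
  obtain m where m: "m \<in> {1..N}" "\<And>u. u \<in> {1..N} \<Longrightarrow> S u \<le> S m"
    using finite_ex_max_value[of "{1..N}" S] assms by auto
  have "(if m = 1 then 2 else 1) \<in> {1..N} - {m}"
    using assms m(1) by auto
  then have "{1..N} - {m} \<noteq> {}" by blast
  then obtain m' where m': "m' \<in> {1..N} - {m}" "\<And>u. u \<in> {1..N} - {m} \<Longrightarrow> S u \<le> S m'"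
    using finite_ex_max_value[of "{1..N} - {m}" S] by auto
  obtain S' where S: "\<And>u. S u = S' u + (if u = m then 1 else 0) + (if u = m' then 1 else 0)"
    and half': "2 * K \<le> (\<Sum>i=1..N. S' i)"
    and cap': "\<And>u. u \<in> {1..N} \<Longrightarrow> K + S' u \<le> (\<Sum>i=1..N. S' i)"
    using capacity_conditions_decrement_top_two[OF _ m(1) _ _ m(2) m'(2) Suc.prems] m'(1) by blast
  obtain x' where x': "\<forall>p. p \<notin> pairs N \<longrightarrow> x' p = 0" "(\<Sum>p\<in>pairs N. x' p) = K"
      "\<forall>i\<in>{1..N}. client_load N x' i \<le> S' i"
    using Suc.IH[OF half' cap'] by blast
  define e where "e = (min m m', max m m')"
  have e: "e \<in> pairs N" using m m' unfolding e_def pairs_def by auto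
  define x where "x = (\<lambda>p. x' p + (if p = e then 1 else 0))"
  have "\<forall>p. p \<notin> pairs N \<longrightarrow> x p = 0" using x'(1) e unfolding x_def by auto
  moreover have "(\<Sum>p\<in>pairs N. x p) = Suc K"
    unfolding x_def using x'(2) e finite_pairs[of N] by (simp add: sum.distrib)
  moreover have "\<forall>i\<in>{1..N}. client_load N x i \<le> S i"
  proof
    fix i assume i: "i \<in> {1..N}"
    have "client_load N x i = client_load N x' i + (if i = m \<or> i = m' then 1 else 0)"
      using e unfolding x_def client_load_add e_def
      by (subst client_load_unit) (auto simp: min_def max_def)
    then show "client_load N x i \<le> S i"
      using x'(3) i S[of i] m'(1) by auto
  qed
  ultimately show ?case by blast
qed

lemma ex_feasible_total_eq_max_total:
  assumes "N \<ge> 2"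
  obtains x where "x \<in> feasible N B S" "(\<Sum>p\<in>pairs N. x p) = max_total N B S"
proof -
  let ?T = "\<Sum>i=1..N. S i"
  have max_le: "S u \<le> Max (S ` {1..N})" if "u \<in> {1..N}" for u
    using that by (intro Max_ge) auto
  have "Max (S ` {1..N}) \<in> S ` {1..N}" by (rule Max_in) (use assms in auto)
  then obtain m where "m \<in> {1..N}" "Max (S ` {1..N}) = S m" by auto
  then have "Max (S ` {1..N}) \<le> ?T"
    by (simp add: member_le_sum)
  then have "max_total N B S + S u \<le> ?T" if "u \<in> {1..N}" for u
    using max_le[OF that] unfolding max_total_def by linarith
  moreover have "2 * max_total N B S \<le> ?T" unfolding max_total_def by linarith
  ultimately obtain x where "\<forall>p. p \<notin> pairs N \<longrightarrow> x p = 0"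
      "(\<Sum>p\<in>pairs N. x p) = max_total N B S" "\<forall>i\<in>{1..N}. client_load N x i \<le> S i"
    using ex_allocation[of N] assms by blast
  moreover from this have "x \<in> feasible N B S"
    by (simp add: feasible_iff_client_load max_total_def)
  ultimately show ?thesis using that by blast
qed

lemma finite_feasible: "finite (feasible N B S)"
proof -
  have "x p \<le> B" if "x \<in> feasible N B S" "p \<in> pairs N" for x p
  proof -
    have "x p \<le> (\<Sum>q\<in>pairs N. x q)"
      using that(2) finite_pairs by (intro member_le_sum) auto
    then show ?thesis using that(1) by (simp add: feasible_def)
  qed
  then have "(\<lambda>x. restrict x (pairs N)) ` feasible N B S \<subseteq> PiE (pairs N) (\<lambda>_. {0..B})"
    by auto
  then have "finite ((\<lambda>x. restrict x (pairs N)) ` feasible N B S)"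
    by (rule finite_subset) (simp add: finite_PiE finite_pairs)
  moreover have "inj_on (\<lambda>x. restrict x (pairs N)) (feasible N B S)"
  proof (rule inj_onI)
    fix x y assume "x \<in> feasible N B S" "y \<in> feasible N B S"
      and "restrict x (pairs N) = restrict y (pairs N)"
    then show "x = y"
      by (simp add: feasible_def fun_eq_iff restrict_def) metis
  qed
  ultimately show ?thesis by (rule finite_imageD)
qed

lemma sum_pairs_convex_combination:
  "(\<Sum>p\<in>pairs N. c * (\<Sum>x\<in>F. \<delta> x * real (x p))) = c * (\<Sum>x\<in>F. \<delta> x * real (\<Sum>p\<in>pairs N. x p))"
proof -
  have "(\<Sum>p\<in>pairs N. c * (\<Sum>x\<in>F. \<delta> x * real (x p)))
      = c * (\<Sum>p\<in>pairs N. \<Sum>x\<in>F. \<delta> x * real (x p))"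
    by (rule sum_distrib_left[symmetric])
  also have "\<dots> = c * (\<Sum>x\<in>F. \<Sum>p\<in>pairs N. \<delta> x * real (x p))"
    by (subst sum.swap) (rule refl)
  also have "\<dots> = c * (\<Sum>x\<in>F. \<delta> x * real (\<Sum>p\<in>pairs N. x p))"
    by (simp add: sum_distrib_left)
  finally show ?thesis .
qed

lemma convex_combination_le:
  fixes \<delta> f :: "'a \<Rightarrow> real"
  assumes "\<And>x. x \<in> F \<Longrightarrow> 0 \<le> \<delta> x" "sum \<delta> F = 1" "\<And>x. x \<in> F \<Longrightarrow> f x \<le> K"
  shows "(\<Sum>x\<in>F. \<delta> x * f x) \<le> K"
proof -
  have "(\<Sum>x\<in>F. \<delta> x * f x) \<le> (\<Sum>x\<in>F. \<delta> x * K)"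
    using assms(1,3) by (intro sum_mono mult_left_mono) auto
  also have "\<dots> = K" using assms(2) by (simp flip: sum_distrib_right)
  finally show ?thesis .
qed

lemma point_mass_in_throughput_region:
  assumes "x0 \<in> feasible N B S"
  shows "(\<lambda>p. pe2e / dt * real (x0 p)) \<in> throughput_region N B S pe2e dt"
proof -
  let ?\<delta> = "\<lambda>x. if x = x0 then 1 else 0 :: real"
  have "(\<Sum>x\<in>feasible N B S. ?\<delta> x * real (x p)) = real (x0 p)" for p
  proof -
    have "(\<Sum>x\<in>feasible N B S. ?\<delta> x * real (x p))
        = (\<Sum>x\<in>feasible N B S. if x = x0 then real (x0 p) else 0)"
      by (rule sum.cong) auto
    then show ?thesis using assms finite_feasible by simp
  qed
  then show ?thesis
    unfolding throughput_region_def using assms finite_feasible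
    by (intro CollectI exI[of _ ?\<delta>]) auto
qed

theorem theorem1:
  fixes N B :: nat and S :: "nat \<Rightarrow> nat" and pe2e dt :: real
  assumes "N \<ge> 2" and "0 \<le> pe2e" and "pe2e \<le> 1" and "dt > 0"
  defines "R \<equiv> pe2e / dt * real (min B (min ((\<Sum>i=1..N. S i) div 2)
                    ((\<Sum>i=1..N. S i) - Max (S ` {1..N}))))"
  shows "(\<exists>lam\<in>throughput_region N B S pe2e dt. (\<Sum>p\<in>pairs N. lam p) = R)
       \<and> (\<forall>lam\<in>throughput_region N B S pe2e dt. (\<Sum>p\<in>pairs N. lam p) \<le> R)"
proof
  let ?F = "feasible N B S"
  have R: "R = pe2e / dt * real (max_total N B S)" unfolding R_def max_total_def ..
  obtain x0 where x0: "x0 \<in> ?F" "(\<Sum>p\<in>pairs N. x0 p) = max_total N B S"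
    using ex_feasible_total_eq_max_total[OF assms(1)] .
  have "(\<Sum>p\<in>pairs N. pe2e / dt * real (x0 p)) = R"
    unfolding R x0(2)[symmetric] by (simp add: sum_distrib_left)
  then show "\<exists>lam\<in>throughput_region N B S pe2e dt. (\<Sum>p\<in>pairs N. lam p) = R"
    using point_mass_in_throughput_region[OF x0(1)] by blast
  show "\<forall>lam\<in>throughput_region N B S pe2e dt. (\<Sum>p\<in>pairs N. lam p) \<le> R"
  proof
    fix lam assume "lam \<in> throughput_region N B S pe2e dt"
    then obtain \<delta> where \<delta>: "\<forall>x\<in>?F. 0 \<le> \<delta> x" "sum \<delta> ?F = 1"
      and lam: "lam = (\<lambda>p. pe2e / dt * (\<Sum>x\<in>?F. \<delta> x * real (x p)))"
      unfolding throughput_region_def by blast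
    have "(\<Sum>x\<in>?F. \<delta> x * real (\<Sum>p\<in>pairs N. x p)) \<le> real (max_total N B S)"
      using \<delta> feasible_total_le_max_total[of _ N B S] assms(1)
      by (intro convex_combination_le) (auto simp del: of_nat_sum)
    then show "(\<Sum>p\<in>pairs N. lam p) \<le> R"
      unfolding lam sum_pairs_convex_combination R using assms(2,4)
      by (intro mult_left_mono) auto
  qed
qed

end
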